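(* Let $p,q,r>0$ with $p+q+r=1$ and $q>p$. Consider the nearest-neighbor Markov chain on $\Omega=\{0,1,2,\dots\}$ with transition probabilities $P(0,1)=1$ and, for $n\ge 1$, $P(n,n-1)=q$, $P(n,n)=r$, $P(n,n+1)=p$, started at $X_0=0$. Let $Q_n$ be its orthogonal polynomials and $\psi$ its spectral measure (as defined in the context), let $\nu$ be its stationary distribution and $\mu_t$ the distribution of $X_t$. Then for all integers $t,n\ge 0$, $$\int_{(-1,1)} \lambda^t Q_n(\lambda)\, d\psi(\lambda) = \frac{(1+q-p)(q+r)-q}{(1+q-p)(q+r)}\left(-\frac{q}{q+r}\right)^{t+n} + \left(\sqrt{\frac{q}{p}}\right)^n \frac{p}{q+r}\cdot \frac{1}{2\pi i}\oint_{|z|=1}\frac{\left(\sqrt{pq}(z+z^{-1})+r\right)^t z^n (z-z^{-1})}{\left(z-\sqrt{\frac{p}{q}}\frac{r+(1+q-p)}{2(q+r)}\right)\left(z-\sqrt{\frac{p}{q}}\frac{r-(1+q-p)}{2(q+r)}\right)}\,dz,$$ and for every $t\ge 0$ the total variation distance satisfies $$\|\nu-\mu_t\|_{TV}\le A\left(\frac{q}{q+r}\right)^t + B\left(r+2\sqrt{pq}\right)^t,$$ where $$A=\frac{(1+q-p)(q+r)-q}{(1+q-p)(1-2p)},\qquad B=\frac{\frac{p}{q+r}\left(1+\frac{1}{\sqrt{pq}-p}\right)}{\left(1-\sqrt{\frac{p}{q}}\frac{r+(1+q-p)}{2(q+r)}\right)\left(1+\sqrt{\frac{p}{q}}\frac{r-(1+q-p)}{2(q+r)}\right)}.$$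 Consequently, as $\varepsilon\downarrow 0$, the mixing time satisfies $t_{mix}(\varepsilon)=O\!\left(\frac{\log \varepsilon}{\log m(p,q)}\right)$, where $m(p,q)=\max\left[r+2\sqrt{pq},\ \frac{q}{q+r}\right]$.
   Context: The contour $|z|=1$ is traversed counterclockwise. Reversibility measure: $\pi_0=1$, $\pi_n=p^{n-1}/q^n$ for $n\ge1$; $\rho=\sum_{n\ge0}\pi_n$ and the stationary distribution is $\nu=\pi/\rho$. Orthogonal polynomials: $Q_0(\lambda)=1$, $Q_1(\lambda)=\lambda$, and $\lambda Q_n(\lambda)=qQ_{n-1}(\lambda)+rQ_n(\lambda)+pQ_{n+1}(\lambda)$ for $n\ge1$ (so $(Q_n(\lambda))_n$ is the formal eigenvector $PQ=\lambda Q$). The spectral measure $\psi$ is the (Karlin–McGregor) probability measure on $[-1,1]$ for which $\int Q_iQ_j\,d\psi=\delta_{ij}/\pi_j$, equivalently $P^t(i,j)=\pi_j\int_{-1}^1\lambda^tQ_i(\lambda)Q_j(\lambda)\,d\psi(\lambda)$ for all $i,j,t$; the integral in the claim is over the open interval $(-1,1)$, excluding the atom at $1$. Total variation distance: $\|\nu-\mu\|_{TV}=\frac12\sum_{x\in\Omega}|\nu(x)-\mu(x)|$. Mixing time (from $X_0=0$): $t_{mix}(\varepsilon)=\min\{t:\|\nu-\mu_t\|_{TV}\le\varepsilon\}$. *)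

theory Defs
  imports "HOL-Complex_Analysis.Complex_Analysis" "HOL-Probability.Probability"
    "HOL-Library.Landau_Symbols"
begin

definition bdP :: "real \<Rightarrow> real \<Rightarrow> real \<Rightarrow> nat \<Rightarrow> nat \<Rightarrow> real" where
  "bdP p q r i j =
     (if i = 0 then (if j = 1 then 1 else 0)
      else if j = i - 1 then q
      else if j = i then r
      else if j = i + 1 then p
      else 0)"

text \<open>t-step transition probabilities P^t(i,j) (matrix power; the chain is
  nearest-neighbour so the sum over intermediate states is finite).\<close>
fun bdPt :: "real \<Rightarrow> real \<Rightarrow> real \<Rightarrow> nat \<Rightarrow> nat \<Rightarrow> nat \<Rightarrow> real" where
  "bdPt p q r 0 i j = (if i = j then 1 else 0)"
| "bdPt p q r (Suc t) i j = (\<Sum>k\<le>i + 1. bdP p q r i k * bdPt p q r t k j)"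

definition mu :: "real \<Rightarrow> real \<Rightarrow> real \<Rightarrow> nat \<Rightarrow> nat \<Rightarrow> real" where
  "mu p q r t x = bdPt p q r t 0 x"

definition piw :: "real \<Rightarrow> real \<Rightarrow> nat \<Rightarrow> real" where
  "piw p q n = (if n = 0 then 1 else p ^ (n - 1) / q ^ n)"

definition rho :: "real \<Rightarrow> real \<Rightarrow> real" where
  "rho p q = (\<Sum>n. piw p q n)"

definition nu :: "real \<Rightarrow> real \<Rightarrow> nat \<Rightarrow> real" where
  "nu p q n = piw p q n / rho p q"

fun Qpoly :: "real \<Rightarrow> real \<Rightarrow> real \<Rightarrow> nat \<Rightarrow> real \<Rightarrow> real" where
  "Qpoly p q r 0 x = 1"
| "Qpoly p q r (Suc 0) x = x"
| "Qpoly p q r (Suc (Suc n)) x =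
     (x * Qpoly p q r (Suc n) x - q * Qpoly p q r n x - r * Qpoly p q r (Suc n) x) / p"

definition is_spectral_measure :: "real \<Rightarrow> real \<Rightarrow> real \<Rightarrow> real measure \<Rightarrow> bool" where
  "is_spectral_measure p q r \<psi> \<longleftrightarrow>
     prob_space \<psi> \<and> sets \<psi> = sets borel \<and> emeasure \<psi> (- {-1..1}) = 0 \<and>
     (\<forall>i j. (\<integral>x. Qpoly p q r i x * Qpoly p q r j x \<partial>\<psi>) =
             (if i = j then 1 / piw p q j else 0))"

definition tv_dist :: "real \<Rightarrow> real \<Rightarrow> real \<Rightarrow> nat \<Rightarrow> real" where
  "tv_dist p q r t = (1/2) * (\<Sum>x. \<bar>nu p q x - mu p q r t x\<bar>)"

definition tmix :: "real \<Rightarrow> real \<Rightarrow> real \<Rightarrow> real \<Rightarrow> nat" where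
  "tmix p q r \<epsilon> = (LEAST t. tv_dist p q r t \<le> \<epsilon>)"

end

theory Submission
  imports Defs
begin

text \<open>By reversibility, \<open>\<mu>\<^sub>t(x) = \<pi>\<^sub>x P\<^sup>t(x,0)\<close>, and by the Karlin-McGregor formula
  \<open>P\<^sup>t(n,0) = \<integral> \<lambda>\<^sup>t Q\<^sub>n d\<psi>\<close>; so everything is governed by the column \<open>P\<^sup>t(\<cdot>,0)\<close>, which is
  determined by its value at \<open>t = 0\<close> and the one-step recursion in \<open>t\<close>.  The explicit
  expression \<open>\<nu>(0) + c \<lambda>\<^sub>0\<^sup>t\<^sup>+\<^sup>n + (contour integral)\<close> obeys the same recursion: \<open>\<lambda>\<^sub>0 = -q/(q+r)\<close>
  has the eigenvector \<open>(\<lambda>\<^sub>0\<^sup>n)\<close>; the symbol \<open>\<surd>(pq) (z + 1/z) + r\<close> of the walk, rescaled by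
  \<open>\<surd>(q/p)\<^sup>n z\<^sup>n\<close>, reproduces the three transition terms; and at the reflecting state \<open>0\<close> the
  discrepancy is an exact derivative on the circle.  At \<open>t = 0\<close> the residues at the two poles
  inside the disc give the initial column.  As \<open>t \<rightarrow> \<infinity>\<close> the column tends to \<open>\<nu>(0)\<close>, which
  identifies the atoms \<open>\<psi>{1} = \<nu>(0)\<close>, \<open>\<psi>{-1} = 0\<close> and yields the integral over \<open>(-1,1)\<close>.
  On the unit circle the integrand is \<open>O((r + 2\<surd>(pq))\<^sup>t)\<close>; summing the pointwise bound
  against \<open>\<pi>\<close> gives the total variation bound, which decays geometrically with ratio
  \<open>m(p,q) < 1\<close> and therefore forces a logarithmic mixing time.\<close>

section \<open>The birth-death chain\<close>

lemma bdP_eq_0_beyond: "i + 1 < j \<Longrightarrow> bdP p q r i j = 0"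
  by (auto simp: bdP_def)

lemma bdP_eq_0_below: "i + 1 < j \<Longrightarrow> bdP p q r j i = 0"
  by (auto simp: bdP_def)

lemma bdPt_eq_0_beyond: "i + t < j \<Longrightarrow> bdPt p q r t i j = 0"
proof (induction t arbitrary: i)
  case (Suc t)
  then have "bdPt p q r t k j = 0" if "k \<le> i + 1" for k
    using that by auto
  then show ?case by simp
qed simp

lemma bdPt_1: "bdPt p q r 1 i j = bdP p q r i j"
proof -
  have "(\<Sum>k\<le>i + 1. bdP p q r i k * (if k = j then 1 else 0)) = (\<Sum>k\<le>i + 1. if k = j then bdP p q r i j else 0)"
    by (rule sum.cong) auto
  then show ?thesis
    by (cases "j \<le> i + 1") (auto simp: bdP_eq_0_beyond)
qed

lemma bdPt_Suc_right: "bdPt p q r (Suc t) i j = (\<Sum>k\<le>i + t. bdPt p q r t i k * bdP p q r k j)"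
proof (induction t arbitrary: i)
  case 0
  have "(\<Sum>k\<le>i. bdPt p q r 0 i k * bdP p q r k j) = (\<Sum>k\<le>i. if k = i then bdP p q r i j else 0)"
    by (rule sum.cong) auto
  then show ?case using bdPt_1[of p q r i j] by simp
next
  case (Suc t)
  have "bdPt p q r (Suc (Suc t)) i j
        = (\<Sum>k\<le>i + 1. bdP p q r i k * (\<Sum>l\<le>k + t. bdPt p q r t k l * bdP p q r l j))"
    by (subst bdPt.simps(2)) (simp only: Suc.IH)
  also have "\<dots> = (\<Sum>k\<le>i + 1. bdP p q r i k * (\<Sum>l\<le>i + Suc t. bdPt p q r t k l * bdP p q r l j))"
  proof (rule sum.cong[OF refl])
    fix k assume "k \<in> {..i + 1}"
    then have "(\<Sum>l\<le>k + t. bdPt p q r t k l * bdP p q r l j) = (\<Sum>l\<le>i + Suc t. bdPt p q r t k l * bdP p q r l j)"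
      by (intro sum.mono_neutral_left) (auto simp: bdPt_eq_0_beyond)
    then show "bdP p q r i k * (\<Sum>l\<le>k + t. bdPt p q r t k l * bdP p q r l j) =
          bdP p q r i k * (\<Sum>l\<le>i + Suc t. bdPt p q r t k l * bdP p q r l j)" by simp
  qed
  also have "\<dots> = (\<Sum>l\<le>i + Suc t. (\<Sum>k\<le>i + 1. bdP p q r i k * bdPt p q r t k l) * bdP p q r l j)"
    by (simp only: sum_distrib_left sum_distrib_right mult.assoc) (rule sum.swap)
  finally show ?case by simp
qed

lemma bdP_sum_mult:
  "(\<Sum>k\<le>n + 1. bdP p q r n k * f k) =
     (if n = 0 then f 1 else q * f (n - 1) + r * f n + p * f (n + 1))"
proof (cases n)
  case (Suc m)
  have "(\<Sum>k\<le>n + 1. bdP p q r n k * f k) = (\<Sum>k\<in>{m, Suc m, Suc (Suc m)}. bdP p q r n k * f k)"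
    by (rule sum.mono_neutral_right) (auto simp: Suc bdP_def)
  then show ?thesis by (simp add: Suc bdP_def)
qed (simp add: bdP_def)

lemma piw_bdP_sym:
  assumes "q \<noteq> 0"
  shows "piw p q i * bdP p q r i j = piw p q j * bdP p q r j i"
proof -
  consider "j = i" | "j = i + 1" | "i = j + 1" | "i + 1 < j" | "j + 1 < i" by linarith
  then show ?thesis
  proof cases
    case 2 then show ?thesis using assms
      by (cases i) (simp_all add: piw_def bdP_def)
  next
    case 3 then show ?thesis using assms
      by (cases j) (simp_all add: piw_def bdP_def)
  qed (auto simp: bdP_eq_0_beyond bdP_eq_0_below)
qed

lemma piw_bdPt_sym:
  assumes "q \<noteq> 0"
  shows "piw p q i * bdPt p q r t i j = piw p q j * bdPt p q r t j i"
proof (induction t arbitrary: i j)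
  case (Suc t)
  have "piw p q i * bdPt p q r (Suc t) i j
     = (\<Sum>k\<le>i + 1. (piw p q i * bdP p q r i k) * bdPt p q r t k j)"
    by (simp only: bdPt.simps(2) sum_distrib_left mult.assoc)
  also have "\<dots> = (\<Sum>k\<le>i + 1. bdP p q r k i * (piw p q j * bdPt p q r t j k))"
    by (rule sum.cong[OF refl]) (simp add: piw_bdP_sym[OF assms, of p i] Suc.IH mult_ac)
  also have "\<dots> = piw p q j * (\<Sum>k\<le>i + 1. bdPt p q r t j k * bdP p q r k i)"
    by (subst sum_distrib_left) (rule sum.cong[OF refl], simp only: mult_ac)
  also have "(\<Sum>k\<le>i + 1. bdPt p q r t j k * bdP p q r k i) = (\<Sum>k\<le>i + 1 + j + t. bdPt p q r t j k * bdP p q r k i)"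
    by (rule sum.mono_neutral_left) (auto simp: bdP_eq_0_below)
  also have "(\<Sum>k\<le>i + 1 + j + t. bdPt p q r t j k * bdP p q r k i) = (\<Sum>k\<le>j + t. bdPt p q r t j k * bdP p q r k i)"
    by (rule sum.mono_neutral_right) (auto simp: bdPt_eq_0_beyond)
  finally show ?case by (simp only: bdPt_Suc_right)
qed simp

lemma piw_power_sums:
  assumes "0 < p" "0 < q" "0 \<le> y" "p * y < q"
  shows "(\<lambda>x. piw p q x * y ^ x) sums (1 + y / (q - p * y))"
proof -
  have geom: "(\<lambda>n. y / q * (p * y / q) ^ n) sums (y / q * (1 / (1 - p * y / q)))"
    by (intro sums_mult geometric_sums) (use assms in \<open>auto simp: divide_simps\<close>)
  have summand: "piw p q (Suc n) * y ^ Suc n = y / q * (p * y / q) ^ n" for n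
    using assms by (simp add: piw_def power_mult_distrib power_divide field_simps)
  have limit: "y / q * (1 / (1 - p * y / q)) = y / (q - p * y)"
    using assms by (simp add: field_simps)
  have "(\<lambda>n. piw p q (Suc n) * y ^ Suc n) sums (y / (q - p * y))"
    using geom unfolding summand limit .
  then have "(\<lambda>x. piw p q x * y ^ x) sums (y / (q - p * y) + piw p q 0 * y ^ 0)"
    by (rule sums_Suc)
  then show ?thesis by (simp add: piw_def add.commute)
qed

lemma piw_nonneg: "0 \<le> p \<Longrightarrow> 0 \<le> q \<Longrightarrow> 0 \<le> piw p q x"
  by (simp add: piw_def)

lemma mu_eq_piw_bdPt: "q \<noteq> 0 \<Longrightarrow> mu p q r t x = piw p q x * bdPt p q r t x 0"
  using piw_bdPt_sym[of q p 0 r t x] by (simp add: mu_def piw_def)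

section \<open>Contour integrals over the unit circle\<close>

lemma has_contour_integral_power_div_circlepath:
  assumes "norm w < 1"
  shows "((\<lambda>z. z ^ k / (z - w)) has_contour_integral (2 * of_real pi * \<i> * w ^ k)) (circlepath 0 1)"
  using Cauchy_integral_circlepath_simple[of "\<lambda>z. z ^ k" 0 1 w] assms
  by (simp add: holomorphic_intros)

lemma has_contour_integral_power_div_two_poles:
  assumes "norm a < 1" "norm b < 1" "a \<noteq> b"
  shows "((\<lambda>z. z ^ k / ((z - a) * (z - b))) has_contour_integral
            (2 * of_real pi * \<i> * ((a ^ k - b ^ k) / (a - b)))) (circlepath 0 1)"
proof -
  have "((\<lambda>z. (z ^ k / (z - a) - z ^ k / (z - b)) / (a - b)) has_contour_integral
            ((2 * of_real pi * \<i> * a ^ k - 2 * of_real pi * \<i> * b ^ k) / (a - b))) (circlepath 0 1)"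
    by (intro has_contour_integral_div has_contour_integral_diff has_contour_integral_power_div_circlepath assms)
  then have "((\<lambda>z. (z ^ k / (z - a) - z ^ k / (z - b)) / (a - b)) has_contour_integral
            (2 * of_real pi * \<i> * ((a ^ k - b ^ k) / (a - b)))) (circlepath 0 1)"
    by (simp add: algebra_simps diff_divide_distrib)
  then show ?thesis
  proof (rule has_contour_integral_eq)
    fix z assume "z \<in> path_image (circlepath 0 1)"
    then have "z \<noteq> a" "z \<noteq> b" using assms by auto
    then show "(z ^ k / (z - a) - z ^ k / (z - b)) / (a - b) = z ^ k / ((z - a) * (z - b))"
      using assms by (simp add: divide_simps) (simp add: algebra_simps)
  qed
qed

lemma has_contour_integral_inverse_div_two_poles:
  assumes "norm a < 1" "norm b < 1" "a \<noteq> b" "a \<noteq> 0" "b \<noteq> 0"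
  shows "((\<lambda>z. inverse z / ((z - a) * (z - b))) has_contour_integral 0) (circlepath 0 1)"
proof -
  let ?R = "\<lambda>w. (\<lambda>z. z ^ 0 / (z - w))"
  have "((\<lambda>z. 1 / (a * b) * ?R 0 z + 1 / (a * (a - b)) * ?R a z - 1 / (b * (a - b)) * ?R b z)
     has_contour_integral (1 / (a * b) * (2 * of_real pi * \<i> * 0 ^ 0) + 1 / (a * (a - b)) * (2 * of_real pi * \<i> * a ^ 0)
        - 1 / (b * (a - b)) * (2 * of_real pi * \<i> * b ^ 0))) (circlepath 0 1)"
    by (intro has_contour_integral_diff has_contour_integral_add has_contour_integral_lmul
        has_contour_integral_power_div_circlepath) (use assms in auto)
  then have "((\<lambda>z. 1 / (a * b) * ?R 0 z + 1 / (a * (a - b)) * ?R a z - 1 / (b * (a - b)) * ?R b z)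
     has_contour_integral 0) (circlepath 0 1)"
    using assms by (simp add: field_simps)
  then show ?thesis
  proof (rule has_contour_integral_eq)
    fix z assume "z \<in> path_image (circlepath 0 1)"
    then have "z \<noteq> a" "z \<noteq> b" "z \<noteq> 0" using assms by auto
    then show "1 / (a * b) * ?R 0 z + 1 / (a * (a - b)) * ?R a z - 1 / (b * (a - b)) * ?R b z
       = inverse z / ((z - a) * (z - b))"
      using assms by (simp add: divide_simps) (simp add: algebra_simps)
  qed
qed

definition spectral_integrand :: "real \<Rightarrow> real \<Rightarrow> real \<Rightarrow> real \<Rightarrow> nat \<Rightarrow> nat \<Rightarrow> complex \<Rightarrow> complex" where
  "spectral_integrand g r a b t n =
     (\<lambda>z. (of_real g * (z + inverse z) + of_real r) ^ t * z ^ n * (z - inverse z)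
            / ((z - of_real a) * (z - of_real b)))"

lemma spectral_integrand_has_contour_integral:
  assumes "\<bar>a\<bar> < 1" "\<bar>b\<bar> < 1"
  shows "(spectral_integrand g r a b t n has_contour_integral
            contour_integral (circlepath 0 1) (spectral_integrand g r a b t n)) (circlepath 0 1)"
proof (intro has_contour_integral_integral contour_integrable_continuous_circlepath)
  have "(z - of_real a) * (z - of_real b) \<noteq> 0" if "z \<in> sphere 0 1" for z :: complex
    using that assms by auto
  moreover have "z \<noteq> 0" if "z \<in> sphere 0 1" for z :: complex
    using that by auto
  ultimately show "continuous_on (path_image (circlepath 0 1)) (spectral_integrand g r a b t n)"
    unfolding spectral_integrand_def by (auto intro!: continuous_intros)
qed

lemma contour_integral_spectral_integrand_0:
  assumes "\<bar>a\<bar> < 1" "\<bar>b\<bar> < 1" "a \<noteq> b" "a \<noteq> 0" "b \<noteq> 0"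
  shows "contour_integral (circlepath 0 1) (spectral_integrand g r a b 0 n) =
     2 * of_real pi * \<i> * of_real
       ((a ^ (n + 1) - b ^ (n + 1) - (if n = 0 then 0 else a ^ (n - 1) - b ^ (n - 1))) / (a - b))"
proof -
  have poles: "norm (complex_of_real a) < 1" "norm (complex_of_real b) < 1"
    "complex_of_real a \<noteq> complex_of_real b" "complex_of_real a \<noteq> 0" "complex_of_real b \<noteq> 0"
    using assms by auto
  show ?thesis
  proof (cases n)
    case 0
    have "((\<lambda>z. z ^ 1 / ((z - of_real a) * (z - of_real b)) - inverse z / ((z - of_real a) * (z - of_real b)))
       has_contour_integral
        (2 * of_real pi * \<i> * ((of_real a ^ 1 - of_real b ^ 1) / (of_real a - of_real b)) - 0)) (circlepath 0 1)"
      by (intro has_contour_integral_diff has_contour_integral_power_div_two_poles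
          has_contour_integral_inverse_div_two_poles poles)
    then have "(spectral_integrand g r a b 0 n has_contour_integral
        (2 * of_real pi * \<i> * ((of_real a ^ 1 - of_real b ^ 1) / (of_real a - of_real b)) - 0)) (circlepath 0 1)"
      by (rule has_contour_integral_eq) (auto simp: spectral_integrand_def 0 diff_divide_distrib)
    then show ?thesis using 0 by (simp add: contour_integral_unique)
  next
    case (Suc m)
    let ?I = "\<lambda>k. 2 * of_real pi * \<i> * ((of_real a ^ k - of_real b ^ k) / (of_real a - of_real b))"
    have "((\<lambda>z. z ^ (m + 2) / ((z - of_real a) * (z - of_real b)) - z ^ m / ((z - of_real a) * (z - of_real b)))
       has_contour_integral ?I (m + 2) - ?I m) (circlepath 0 1)"
      by (intro has_contour_integral_diff has_contour_integral_power_div_two_poles poles)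
    then have "(spectral_integrand g r a b 0 n has_contour_integral ?I (m + 2) - ?I m) (circlepath 0 1)"
    proof (rule has_contour_integral_eq)
      fix z :: complex assume "z \<in> path_image (circlepath 0 1)"
      then have "z \<noteq> 0" by auto
      then have "z ^ Suc m * (z - inverse z) = z ^ (m + 2) - z ^ m"
        by (simp add: algebra_simps power_Suc)
      then show "z ^ (m + 2) / ((z - of_real a) * (z - of_real b)) - z ^ m / ((z - of_real a) * (z - of_real b))
          = spectral_integrand g r a b 0 n z"
        by (simp add: spectral_integrand_def Suc diff_divide_distrib)
    qed
    then show ?thesis
      by (simp add: contour_integral_unique Suc diff_divide_distrib right_diff_distrib)
  qed
qed

text \<open>The symbol \<open>g (z + 1/z) + r\<close> of the walk, multiplied by \<open>s\<^sup>m\<^sup>+\<^sup>1 z\<^sup>m\<^sup>+\<^sup>1\<close>,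
  splits into the three transition terms \<open>q s\<^sup>m z\<^sup>m + r s\<^sup>m\<^sup>+\<^sup>1 z\<^sup>m\<^sup>+\<^sup>1 + p s\<^sup>m\<^sup>+\<^sup>2 z\<^sup>m\<^sup>+\<^sup>2\<close>.\<close>

lemma spectral_integrand_three_term:
  assumes "z \<noteq> 0" and gs: "q = g * s" "p * s = g"
  shows "of_real q * of_real s ^ m * spectral_integrand g r a b t m z
       + of_real r * of_real s ^ (m + 1) * spectral_integrand g r a b t (m + 1) z
       + of_real p * of_real s ^ (m + 2) * spectral_integrand g r a b t (m + 2) z
       = of_real s ^ (m + 1) * spectral_integrand g r a b (t + 1) (m + 1) z"
proof -
  define A where "A = of_real g * (z + inverse z) + complex_of_real r"
  define W where "W = (z - inverse z) / ((z - of_real a) * (z - of_real b))"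
  have F: "spectral_integrand g r a b t' n z = A ^ t' * z ^ n * W" for t' n
    by (simp add: spectral_integrand_def A_def W_def)
  have q': "complex_of_real q = of_real g * of_real s" using gs by simp
  have p': "complex_of_real p * of_real s ^ (m + 2) = of_real g * of_real s ^ (m + 1)"
    using gs by (simp add: power_Suc flip: of_real_mult of_real_power)
  have ps': "complex_of_real p * of_real s = of_real g" using gs by (simp flip: of_real_mult)
  have zi: "z ^ (m + 1) * inverse z = z ^ m" using \<open>z \<noteq> 0\<close> by (simp add: power_Suc)
  have "of_real s ^ (m + 1) * z ^ (m + 1) * A =
      of_real g * of_real s ^ (m + 1) * (z ^ (m + 1) * inverse z) + of_real r * of_real s ^ (m + 1) * z ^ (m + 1)
      + of_real g * of_real s ^ (m + 1) * z ^ (m + 2)"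
    by (simp add: A_def algebra_simps power_Suc)
  also have "\<dots> = of_real q * of_real s ^ m * z ^ m + of_real r * of_real s ^ (m + 1) * z ^ (m + 1)
      + of_real p * of_real s ^ (m + 2) * z ^ (m + 2)"
    unfolding zi q' p'[symmetric] using ps' by (simp add: algebra_simps power_Suc)
  finally have symbol: "of_real q * of_real s ^ m * z ^ m + of_real r * of_real s ^ (m + 1) * z ^ (m + 1)
      + of_real p * of_real s ^ (m + 2) * z ^ (m + 2) = of_real s ^ (m + 1) * z ^ (m + 1) * A" by simp
  have "of_real q * of_real s ^ m * spectral_integrand g r a b t m z
      + of_real r * of_real s ^ (m + 1) * spectral_integrand g r a b t (m + 1) z
      + of_real p * of_real s ^ (m + 2) * spectral_integrand g r a b t (m + 2) z
     = A ^ t * W * (of_real q * of_real s ^ m * z ^ m + of_real r * of_real s ^ (m + 1) * z ^ (m + 1)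
      + of_real p * of_real s ^ (m + 2) * z ^ (m + 2))"
    unfolding F by (simp add: algebra_simps)
  also have "\<dots> = of_real s ^ (m + 1) * spectral_integrand g r a b (t + 1) (m + 1) z"
    unfolding symbol F by (simp add: algebra_simps)
  finally show ?thesis .
qed

lemma contour_integral_spectral_integrand_recurrence:
  assumes ab: "\<bar>a\<bar> < 1" "\<bar>b\<bar> < 1" and gs: "q = g * s" "p * s = g"
  shows "of_real q * of_real s ^ m * contour_integral (circlepath 0 1) (spectral_integrand g r a b t m)
       + of_real r * of_real s ^ (m + 1) * contour_integral (circlepath 0 1) (spectral_integrand g r a b t (m + 1))
       + of_real p * of_real s ^ (m + 2) * contour_integral (circlepath 0 1) (spectral_integrand g r a b t (m + 2))
       = of_real s ^ (m + 1) * contour_integral (circlepath 0 1) (spectral_integrand g r a b (t + 1) (m + 1))"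
proof -
  let ?F = "spectral_integrand g r a b" and ?C = "\<lambda>t n. contour_integral (circlepath 0 1) (spectral_integrand g r a b t n)"
  have "((\<lambda>z. of_real q * of_real s ^ m * ?F t m z + of_real r * of_real s ^ (m + 1) * ?F t (m + 1) z
       + of_real p * of_real s ^ (m + 2) * ?F t (m + 2) z) has_contour_integral
       (of_real q * of_real s ^ m * ?C t m + of_real r * of_real s ^ (m + 1) * ?C t (m + 1)
       + of_real p * of_real s ^ (m + 2) * ?C t (m + 2))) (circlepath 0 1)"
    by (intro has_contour_integral_add has_contour_integral_lmul spectral_integrand_has_contour_integral ab)
  then have "((\<lambda>z. of_real s ^ (m + 1) * ?F (t + 1) (m + 1) z) has_contour_integral
       (of_real q * of_real s ^ m * ?C t m + of_real r * of_real s ^ (m + 1) * ?C t (m + 1)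
       + of_real p * of_real s ^ (m + 2) * ?C t (m + 2))) (circlepath 0 1)"
    by (rule has_contour_integral_eq) (rule spectral_integrand_three_term; use gs in auto)
  moreover have "((\<lambda>z. of_real s ^ (m + 1) * ?F (t + 1) (m + 1) z) has_contour_integral
       (of_real s ^ (m + 1) * ?C (t + 1) (m + 1))) (circlepath 0 1)"
    by (intro has_contour_integral_lmul spectral_integrand_has_contour_integral ab)
  ultimately show ?thesis by (metis has_contour_integral_unique)
qed

text \<open>Since \<open>a\<close> and \<open>b\<close> are the roots of \<open>(g - s) z\<^sup>2 + r z + g\<close>, the symbol satisfies
  \<open>g (z + 1/z) + r - s z = (g - s) (z - a) (z - b) / z\<close>, which cancels the poles.\<close>

lemma spectral_integrand_boundary_difference:
  assumes "norm x = 1" "\<bar>a\<bar> < 1" "\<bar>b\<bar> < 1"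
    and roots: "(g - s) * (a + b) = - r" "(g - s) * a * b = g"
  shows "spectral_integrand g r a b (t + 1) 0 x - of_real s * spectral_integrand g r a b t 1 x
       = of_real (g - s) * (of_real g * (x + inverse x) + of_real r) ^ t * (1 - inverse x ^ 2)"
proof -
  define A where "A = of_real g * (x + inverse x) + complex_of_real r"
  have "x \<noteq> 0" and poles: "x - of_real a \<noteq> 0" "x - of_real b \<noteq> 0" using assms(1-3) by auto
  have roots': "complex_of_real (g - s) * (of_real a + of_real b) = - of_real r"
      "complex_of_real (g - s) * of_real a * of_real b = of_real g"
    using arg_cong[OF roots(1), of complex_of_real] arg_cong[OF roots(2), of complex_of_real] by simp_all
  have "of_real (g - s) * ((x - of_real a) * (x - of_real b)) = of_real (g - s) * x ^ 2
      - x * (of_real (g - s) * (of_real a + of_real b)) + of_real (g - s) * of_real a * of_real b"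
    by (simp add: algebra_simps power2_eq_square)
  also have "\<dots> = (A - of_real s * x) * x"
    using \<open>x \<noteq> 0\<close> unfolding roots' by (simp add: A_def algebra_simps power2_eq_square)
  finally have factor: "A - of_real s * x = of_real (g - s) * ((x - of_real a) * (x - of_real b)) / x"
    using \<open>x \<noteq> 0\<close> by (simp add: field_simps)
  define W where "W = (x - inverse x) / ((x - of_real a) * (x - of_real b))"
  have F: "spectral_integrand g r a b t' n x = A ^ t' * x ^ n * W" for t' n
    by (simp add: spectral_integrand_def A_def W_def)
  have "spectral_integrand g r a b (t + 1) 0 x - of_real s * spectral_integrand g r a b t 1 x
      = A ^ t * W * (A - of_real s * x)"
    unfolding F by (simp add: algebra_simps)
  also have "\<dots> = of_real (g - s) * A ^ t * ((x - inverse x) / x)"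
  proof -
    have "Y * (U / P) * (c * P / x) = c * Y * (U / x)" if "P \<noteq> 0" for Y U P c :: complex
      using that by (simp add: field_simps)
    then show ?thesis unfolding factor W_def using poles by simp
  qed
  also have "\<dots> = of_real (g - s) * A ^ t * (1 - inverse x ^ 2)"
    using \<open>x \<noteq> 0\<close> by (simp add: field_simps power2_eq_square)
  finally show ?thesis unfolding A_def .
qed

lemma has_field_derivative_symbol_power:
  assumes "x \<noteq> 0"
  shows "((\<lambda>z. (of_real g * (z + inverse z) + complex_of_real r) ^ (t + 1)) has_field_derivative
          of_nat (t + 1) * (of_real g * (1 - inverse x ^ 2) * (of_real g * (x + inverse x) + of_real r) ^ t)) (at x)"
proof -
  have "((\<lambda>z. inverse z) has_field_derivative - (inverse x ^ 2)) (at x)"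
    using DERIV_inverse[OF assms] by (simp add: numeral_2_eq_2)
  then have "((\<lambda>z. z + inverse z) has_field_derivative 1 + - (inverse x ^ 2)) (at x)"
    by (rule DERIV_add[OF DERIV_ident])
  from DERIV_add[OF DERIV_cmult[OF this, of "of_real g"] DERIV_const[of "of_real r"]]
  have "((\<lambda>z. of_real g * (z + inverse z) + complex_of_real r) has_field_derivative
      of_real g * (1 - inverse x ^ 2)) (at x)"
    by simp
  from DERIV_power[OF this, of "t + 1"] show ?thesis by simp
qed

text \<open>The difference of integrands is the derivative of \<open>(g - s) A\<^sup>t\<^sup>+\<^sup>1 / (g (t + 1))\<close>,
  \<open>A = g (z + 1/z) + r\<close>, so it integrates to zero over the closed circle.\<close>

lemma contour_integral_spectral_integrand_boundary:
  assumes ab: "\<bar>a\<bar> < 1" "\<bar>b\<bar> < 1" and roots: "(g - s) * (a + b) = - r" "(g - s) * a * b = g"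
    and "g \<noteq> 0"
  shows "contour_integral (circlepath 0 1) (spectral_integrand g r a b (t + 1) 0) =
         of_real s * contour_integral (circlepath 0 1) (spectral_integrand g r a b t 1)"
proof -
  let ?F = "spectral_integrand g r a b"
  define A where "A = (\<lambda>z. of_real g * (z + inverse z) + complex_of_real r)"
  define c where "c = complex_of_real ((g - s) / (g * (real t + 1)))"
  define D where "D = (\<lambda>x. of_real (g - s) * A x ^ t * (1 - inverse x ^ 2))"
  have "g * (real t + 1) \<noteq> 0"
    using \<open>g \<noteq> 0\<close> by (simp add: add_nonneg_eq_0_iff)
  then have "(g - s) / (g * (real t + 1)) * (real (t + 1) * g) = g - s"
    by (simp add: field_simps)
  then have c: "c * (of_nat (t + 1) * of_real g) = of_real (g - s)"
    unfolding c_def by (metis of_real_mult of_real_of_nat_eq)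
  have primitive: "((\<lambda>z. c * A z ^ (t + 1)) has_field_derivative D x) (at x within sphere 0 1)"
    if "x \<in> sphere 0 1" for x
  proof -
    from that have "x \<noteq> 0" by auto
    from DERIV_cmult[OF has_field_derivative_symbol_power[OF this, of g r t], of c]
    have "((\<lambda>z. c * A z ^ (t + 1)) has_field_derivative
          c * (of_nat (t + 1) * (of_real g * (1 - inverse x ^ 2) * A x ^ t))) (at x)"
      by (simp add: A_def)
    moreover have "c * (of_nat (t + 1) * (of_real g * (1 - inverse x ^ 2) * A x ^ t)) = D x"
      using c unfolding D_def by (metis (no_types, lifting) mult.assoc mult.commute)
    ultimately show ?thesis by (simp add: has_field_derivative_at_within)
  qed
  have "(D has_contour_integral 0) (circlepath 0 1)"
    by (rule Cauchy_theorem_primitive[of "sphere 0 1"]) (use primitive in auto)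
  moreover have "D x = ?F (t + 1) 0 x - of_real s * ?F t 1 x" if "x \<in> path_image (circlepath 0 1)" for x
    using spectral_integrand_boundary_difference[OF _ ab roots, of x t] that unfolding D_def A_def by simp
  ultimately have zero: "((\<lambda>x. ?F (t + 1) 0 x - of_real s * ?F t 1 x) has_contour_integral 0) (circlepath 0 1)"
    by (rule has_contour_integral_eq)
  have "((\<lambda>x. ?F (t + 1) 0 x - of_real s * ?F t 1 x) has_contour_integral
      (contour_integral (circlepath 0 1) (?F (t + 1) 0) - of_real s * contour_integral (circlepath 0 1) (?F t 1)))
      (circlepath 0 1)"
    by (intro has_contour_integral_diff has_contour_integral_lmul spectral_integrand_has_contour_integral ab)
  from has_contour_integral_unique[OF this zero] show ?thesis by simp
qed

lemma norm_contour_integral_spectral_integrand_le: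
  assumes ab: "\<bar>a\<bar> < 1" "\<bar>b\<bar> < 1" and "0 \<le> g" "0 \<le> r"
  shows "norm (contour_integral (circlepath 0 1) (spectral_integrand g r a b t n))
           \<le> 2 * (r + 2 * g) ^ t / ((1 - \<bar>a\<bar>) * (1 - \<bar>b\<bar>)) * (2 * pi)"
proof -
  have bound: "norm (spectral_integrand g r a b t n z) \<le> 2 * (r + 2 * g) ^ t / ((1 - \<bar>a\<bar>) * (1 - \<bar>b\<bar>))"
    if "norm (z - 0) = 1" for z
  proof -
    from that have z: "norm z = 1" by simp
    have "norm (of_real g * (z + inverse z) + of_real r) \<le> norm (of_real g * (z + inverse z)) + norm (complex_of_real r)"
      by (rule norm_triangle_ineq)
    also have "\<dots> \<le> g * (norm z + norm (inverse z)) + r"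
      using assms by (simp add: norm_mult norm_triangle_ineq mult_left_mono)
    finally have symbol: "norm (of_real g * (z + inverse z) + of_real r) \<le> r + 2 * g"
      using z by (simp add: norm_inverse)
    have "norm (z - inverse z) \<le> 2"
      using norm_triangle_ineq4[of z "inverse z"] z by (simp add: norm_inverse)
    moreover have "1 - \<bar>a\<bar> \<le> norm (z - of_real a)" "1 - \<bar>b\<bar> \<le> norm (z - of_real b)"
      using norm_triangle_ineq2[of z "of_real a"] norm_triangle_ineq2[of z "of_real b"] z by simp_all
    moreover have "norm (spectral_integrand g r a b t n z) =
       norm (of_real g * (z + inverse z) + of_real r) ^ t * norm (z - inverse z)
         / (norm (z - of_real a) * norm (z - of_real b))"
      by (simp add: spectral_integrand_def norm_mult norm_divide norm_power z)
    ultimately show ?thesis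
      using ab assms symbol
      by (simp add: mult.commute frac_le mult_mono power_mono)
  qed
  have "0 \<le> 2 * (r + 2 * g) ^ t / ((1 - \<bar>a\<bar>) * (1 - \<bar>b\<bar>))"
    using assms by simp
  from has_contour_integral_bound_circlepath[OF spectral_integrand_has_contour_integral[OF ab] this
      zero_less_one bound]
  show ?thesis by simp
qed

section \<open>Orthogonal polynomials and the spectral measure\<close>

lemma continuous_on_Qpoly: "continuous_on S (Qpoly p q r n)"
proof -
  have "continuous_on S (Qpoly p q r n) \<and> continuous_on S (Qpoly p q r (Suc n))"
  proof (induction n)
    case (Suc n)
    have "Qpoly p q r (Suc (Suc n)) =
        (\<lambda>x. (x * Qpoly p q r (Suc n) x - q * Qpoly p q r n x - r * Qpoly p q r (Suc n) x) * inverse p)"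
      by (rule ext) (simp add: divide_inverse)
    with Suc show ?case by (auto intro!: continuous_intros)
  qed (auto intro: continuous_intros)
  then show ?thesis ..
qed

lemma Qpoly_1:
  assumes "p \<noteq> 0" "p + q + r = 1"
  shows "Qpoly p q r n 1 = 1"
  using assms by (induction p q r n "1::real" rule: Qpoly.induct) (simp_all add: field_simps)

lemma bdP_sum_mult_Qpoly:
  assumes "p \<noteq> 0"
  shows "(\<Sum>k\<le>i + 1. bdP p q r i k * Qpoly p q r k x) = x * Qpoly p q r i x"
proof (cases i)
  case (Suc m)
  then show ?thesis
    using assms unfolding bdP_sum_mult by (simp add: field_simps)
qed (simp add: bdP_def)

context
  fixes p q r :: real and \<psi> :: "real measure"
  assumes spectral: "is_spectral_measure p q r \<psi>"
begin

lemma prob_space_spectral: "prob_space \<psi>"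
  and sets_spectral: "sets \<psi> = sets borel"
  and space_spectral: "space \<psi> = UNIV"
  using spectral unfolding is_spectral_measure_def by (auto dest: sets_eq_imp_space_eq)

lemma AE_spectral_in_interval: "AE x in \<psi>. x \<in> {-1..1}"
proof (rule AE_I')
  show "- {-1..1} \<in> null_sets \<psi>"
    using spectral unfolding is_spectral_measure_def by (auto intro!: null_setsI)
qed auto

lemma integrable_spectral_continuous:
  assumes "continuous_on UNIV (f :: real \<Rightarrow> real)"
  shows "integrable \<psi> f"
proof -
  interpret prob_space \<psi> by (rule prob_space_spectral)
  have "compact (f ` {-1..1})"
    using assms by (intro compact_continuous_image) (auto intro: continuous_on_subset)
  then have "bounded (f ` {-1..1})" by (rule compact_imp_bounded)
  then obtain B where B: "\<forall>y\<in>f ` {-1..1}. norm y \<le> B"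
    unfolding bounded_iff by blast
  have "AE x in \<psi>. norm (f x) \<le> B"
    using AE_spectral_in_interval by eventually_elim (use B in auto)
  moreover have "f \<in> borel_measurable \<psi>"
    using assms borel_measurable_continuous_onI measurable_cong_sets[OF sets_spectral refl] by blast
  ultimately show ?thesis by (rule integrable_const_bound)
qed

lemma bdPt_to_0_eq_integral:
  assumes "p \<noteq> 0"
  shows "bdPt p q r t i 0 = (\<integral>x. x ^ t * Qpoly p q r i x \<partial>\<psi>)"
proof (induction t arbitrary: i)
  case 0
  have "(\<integral>x. Qpoly p q r i x * Qpoly p q r 0 x \<partial>\<psi>) = (if i = 0 then 1 / piw p q 0 else 0)"
    using spectral unfolding is_spectral_measure_def by blast
  then show ?case by (simp add: piw_def)
next
  case (Suc t)
  have "integrable \<psi> (\<lambda>x. x ^ t * Qpoly p q r k x)" for k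
    by (intro integrable_spectral_continuous continuous_intros continuous_on_Qpoly)
  then have "bdPt p q r (Suc t) i 0 = (\<integral>x. (\<Sum>k\<le>i + 1. bdP p q r i k * (x ^ t * Qpoly p q r k x)) \<partial>\<psi>)"
    by (simp add: Suc.IH)
  also have "\<dots> = (\<integral>x. x ^ t * (\<Sum>k\<le>i + 1. bdP p q r i k * Qpoly p q r k x) \<partial>\<psi>)"
    by (simp only: sum_distrib_left mult.left_commute)
  also have "\<dots> = (\<integral>x. x ^ Suc t * Qpoly p q r i x \<partial>\<psi>)"
    unfolding bdP_sum_mult_Qpoly[OF assms] by (simp add: mult_ac)
  finally show ?case .
qed

lemma integral_spectral_split:
  assumes "continuous_on UNIV (f :: real \<Rightarrow> real)"
  shows "(\<integral>x. f x \<partial>\<psi>) = (LINT x:{-1<..<1}|\<psi>. f x) + f 1 * measure \<psi> {1} + f (-1) * measure \<psi> {-1}"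
proof -
  have sets: "{-1<..<1::real} \<in> sets \<psi>" "{1::real} \<in> sets \<psi>" "{-1::real} \<in> sets \<psi>"
    using sets_spectral by auto
  have integrable: "integrable \<psi> (\<lambda>x. indicator {-1<..<1} x *\<^sub>R f x)"
      "integrable \<psi> (\<lambda>x. f 1 * indicator {1} x)" "integrable \<psi> (\<lambda>x. f (-1) * indicator {-1} x)"
    using integrable_mult_indicator[OF sets(1) integrable_spectral_continuous[OF assms]]
      integrable_mult_indicator[OF sets(2) integrable_spectral_continuous[OF continuous_on_const[of UNIV "f 1"]]]
      integrable_mult_indicator[OF sets(3) integrable_spectral_continuous[OF continuous_on_const[of UNIV "f (-1)"]]]
    by (simp_all add: mult.commute)
  have "(\<integral>x. f x \<partial>\<psi>) = (\<integral>x. indicator {-1<..<1} x *\<^sub>R f x + f 1 * indicator {1} x + f (-1) * indicator {-1} x \<partial>\<psi>)"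
  proof (rule integral_cong_AE)
    show "f \<in> borel_measurable \<psi>"
      using integrable_spectral_continuous[OF assms] by blast
    show "(\<lambda>x. indicator {-1<..<1} x *\<^sub>R f x + f 1 * indicator {1} x + f (-1) * indicator {-1} x) \<in> borel_measurable \<psi>"
      using integrable by auto
    show "AE x in \<psi>. f x = indicator {-1<..<1} x *\<^sub>R f x + f 1 * indicator {1} x + f (-1) * indicator {-1} x"
      using AE_spectral_in_interval by eventually_elim (auto simp: indicator_def)
  qed
  also have "\<dots> = (LINT x:{-1<..<1}|\<psi>. f x) + f 1 * measure \<psi> {1} + f (-1) * measure \<psi> {-1}"
    using integrable by (simp add: set_lebesgue_integral_def space_spectral)
  finally show ?thesis .
qed

lemma tendsto_interior_moments: "(\<lambda>t. LINT x:{-1<..<1}|\<psi>. x ^ t) \<longlonglongrightarrow> 0"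
proof -
  interpret prob_space \<psi> by (rule prob_space_spectral)
  have "(\<lambda>t. \<integral>x. indicator {-1<..<1} x *\<^sub>R x ^ t \<partial>\<psi>) \<longlonglongrightarrow> (\<integral>x. 0 \<partial>\<psi>)"
  proof (rule integral_dominated_convergence[where w = "\<lambda>x. 1"])
    show "(\<lambda>x. indicator {-1<..<1} x *\<^sub>R x ^ t) \<in> borel_measurable \<psi>" for t :: nat
      unfolding measurable_cong_sets[OF sets_spectral refl] by measurable
    show "AE x in \<psi>. (\<lambda>t. indicator {-1<..<1} x *\<^sub>R x ^ t) \<longlonglongrightarrow> 0"
    proof (rule AE_I2)
      fix x :: real
      show "(\<lambda>t. indicator {-1<..<1} x *\<^sub>R x ^ t) \<longlonglongrightarrow> 0"
        by (cases "x \<in> {-1<..<1}") (auto intro: LIMSEQ_abs_realpow_zero2)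
    qed
    show "AE x in \<psi>. norm (indicator {-1<..<1} x *\<^sub>R x ^ t) \<le> 1" for t :: nat
      by (rule AE_I2) (auto simp: indicator_def power_abs intro!: power_le_one)
  qed simp_all
  then show ?thesis by (simp add: set_lebesgue_integral_def)
qed

end

section \<open>Mixing time under geometric decay\<close>

lemma Least_geometric_decay_bigo:
  fixes d :: "nat \<Rightarrow> real"
  assumes decay: "\<And>t. d t \<le> C * M ^ t" and M: "0 < M" "M < 1"
  shows "(\<lambda>\<epsilon>. real (LEAST t. d t \<le> \<epsilon>)) \<in> O[at_right 0](\<lambda>\<epsilon>. ln \<epsilon> / ln M)"
proof -
  define C' where "C' = max C 1"
  have "C * M ^ t \<le> C' * M ^ t" for t
    unfolding C'_def using M by (intro mult_right_mono) auto
  then have C': "1 \<le> C'" "d t \<le> C' * M ^ t" for t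
    using decay[of t] unfolding C'_def by (auto intro: order.trans)
  define L where "L = ln M"
  have "L < 0" unfolding L_def using M by simp
  define k where "k = ln C' / (- L)"
  have "k \<ge> 0" unfolding k_def using C' \<open>L < 0\<close> by (intro divide_nonneg_pos) auto
  define \<delta> where "\<delta> = exp ((k + 1) * L)"
  have "eventually (\<lambda>\<epsilon>. norm (real (LEAST t. d t \<le> \<epsilon>)) \<le> 2 * norm (ln \<epsilon> / L)) (at_right 0)"
    unfolding eventually_at_right_field
  proof (intro exI[of _ \<delta>] conjI allI impI)
    show "\<delta> > 0" unfolding \<delta>_def by simp
    fix \<epsilon> :: real assume "\<epsilon> > 0" and "\<epsilon> < \<delta>"
    then have "ln \<epsilon> < (k + 1) * L" unfolding \<delta>_def by (metis ln_exp ln_less_cancel_iff exp_gt_zero)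
    define v where "v = (ln \<epsilon> - ln C') / L"
    have v: "v = ln \<epsilon> / L + k" "k + 1 < ln \<epsilon> / L"
      using \<open>L < 0\<close> \<open>ln \<epsilon> < (k + 1) * L\<close>
      by (simp_all add: v_def k_def diff_divide_distrib neg_less_divide_eq)
    define N where "N = nat (ceiling v)"
    have N: "v \<le> real N" "real N \<le> v + 1" unfolding N_def using v \<open>k \<ge> 0\<close> by linarith+
    have "M ^ N = exp (real N * L)" unfolding L_def using M by (simp add: exp_of_nat_mult)
    also have "\<dots> \<le> exp (v * L)" using N \<open>L < 0\<close> by (simp add: mult_right_mono_neg)
    also have "\<dots> = \<epsilon> / C'" unfolding v_def using \<open>L < 0\<close> \<open>\<epsilon> > 0\<close> C' by (simp add: exp_diff)
    finally have "d N \<le> \<epsilon>" using C'(2)[of N] C'(1) by (simp add: field_simps)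
    then have "(LEAST t. d t \<le> \<epsilon>) \<le> N" by (rule Least_le)
    then have "real (LEAST t. d t \<le> \<epsilon>) \<le> 2 * (ln \<epsilon> / L)" using N v by linarith
    moreover have "norm (ln \<epsilon> / L) = ln \<epsilon> / L"
      using v(2) \<open>k \<ge> 0\<close> unfolding real_norm_def by linarith
    ultimately show "norm (real (LEAST t. d t \<le> \<epsilon>)) \<le> 2 * norm (ln \<epsilon> / L)"
      by simp
  qed
  then show ?thesis unfolding L_def by (rule bigoI)
qed

section \<open>The chain with drift towards the origin\<close>

locale birth_death_chain =
  fixes p q r :: real
  assumes p_pos: "0 < p" and q_pos: "0 < q" and r_pos: "0 < r"
    and sum_eq_1: "p + q + r = 1" and p_less_q: "p < q"
begin

text \<open>In the integral representation
  \<open>P\<^sup>t(n,0) = nu0 + c_lam lam\<^sup>t\<^sup>+\<^sup>n + kappa ratio\<^sup>n (2\<pi>i)\<^sup>-\<^sup>1 \<ointegral> (gmean (z + 1/z) + r)\<^sup>t z\<^sup>n (z - 1/z) / ((z - pole_a) (z - pole_b)) dz\<close>,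
  \<open>nu0\<close> is the stationary mass of \<open>0\<close>, \<open>(lam\<^sup>n)\<close> is an eigenvector of the transition matrix, and
  \<open>pole_a\<close>, \<open>pole_b\<close> are the roots of \<open>(gmean - ratio) z\<^sup>2 + r z + gmean\<close>.\<close>

definition gmean :: real where "gmean = sqrt (p * q)"
definition ratio :: real where "ratio = sqrt (q / p)"
definition pole_a :: real where "pole_a = sqrt (p / q)"
definition pole_b :: real where "pole_b = - sqrt (p / q) * q / (q + r)"
definition lam :: real where "lam = - q / (q + r)"
definition c_lam :: real where "c_lam = ((1 + q - p) * (q + r) - q) / ((1 + q - p) * (q + r))"
definition kappa :: real where "kappa = p / (q + r)"
definition nu0 :: real where "nu0 = (q - p) / (1 + q - p)"
definition deviation_const :: real where "deviation_const = 2 * kappa / ((1 - pole_a) * (1 + pole_b))"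

lemma pole_a_eq: "sqrt (p / q) * (r + (1 + q - p)) / (2 * (q + r)) = pole_a"
proof -
  have e: "r + (1 + q - p) = 2 * (q + r)" using sum_eq_1 by simp
  have "q + r > 0" using q_pos r_pos by simp
  then show ?thesis unfolding e pole_a_def by simp
qed

lemma pole_b_eq: "sqrt (p / q) * (r - (1 + q - p)) / (2 * (q + r)) = pole_b"
proof -
  have e: "r - (1 + q - p) = - 2 * q" using sum_eq_1 by simp
  have "q + r > 0" using q_pos r_pos by simp
  then show ?thesis unfolding e pole_b_def by (simp add: field_simps)
qed

lemma sqrt_parametrisation:
  obtains sp sq D E where "0 < sp" "sp < sq" "p = sp\<^sup>2" "q = sq\<^sup>2" "0 < D" "0 < E"
    "D = 1 - sp\<^sup>2" "r = D - sq\<^sup>2" "E = 1 + sq\<^sup>2 - sp\<^sup>2"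
    "gmean = sp * sq" "ratio = sq / sp" "pole_a = sp / sq" "pole_b = - (sp / sq) * (sq\<^sup>2 / D)"
    "lam = - (sq\<^sup>2 / D)" "c_lam = (E * D - sq\<^sup>2) / (E * D)" "kappa = sp\<^sup>2 / D" "nu0 = (sq\<^sup>2 - sp\<^sup>2) / E"
proof
  let ?sp = "sqrt p" and ?sq = "sqrt q" and ?D = "q + r" and ?E = "1 + q - p"
  show "0 < ?sp" "?sp < ?sq" "p = ?sp\<^sup>2" "q = ?sq\<^sup>2"
    using p_pos q_pos p_less_q by simp_all
  show "0 < ?D" "0 < ?E" "?D = 1 - ?sp\<^sup>2" "r = ?D - ?sq\<^sup>2" "?E = 1 + ?sq\<^sup>2 - ?sp\<^sup>2"
    using p_pos q_pos r_pos p_less_q sum_eq_1 by simp_all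
  show "gmean = ?sp * ?sq" "ratio = ?sq / ?sp" "pole_a = ?sp / ?sq" "pole_b = - (?sp / ?sq) * (?sq\<^sup>2 / ?D)"
    "lam = - (?sq\<^sup>2 / ?D)" "c_lam = (?E * ?D - ?sq\<^sup>2) / (?E * ?D)" "kappa = ?sp\<^sup>2 / ?D"
    "nu0 = (?sq\<^sup>2 - ?sp\<^sup>2) / ?E"
    unfolding gmean_def ratio_def pole_a_def pole_b_def lam_def c_lam_def kappa_def nu0_def
    using p_pos q_pos by (simp_all add: real_sqrt_mult real_sqrt_divide)
qed

lemma
  shows gmean_pos: "0 < gmean" and ratio_pos: "0 < ratio" and kappa_pos: "0 < kappa"
    and gmean_bounds: "p < gmean" "gmean < q"
    and spectral_edge_lt_1: "r + 2 * gmean < 1"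
    and pole_a_bounds: "0 < pole_a" "pole_a < 1"
    and pole_b_bounds: "-1 < pole_b" "pole_b < 0"
proof -
  obtain sp sq D E where sp: "0 < sp" "sp < sq" "p = sp\<^sup>2" "q = sq\<^sup>2" and "0 < D" "0 < E"
    and D: "D = 1 - sp\<^sup>2" "r = D - sq\<^sup>2" and E: "E = 1 + sq\<^sup>2 - sp\<^sup>2"
    and params: "gmean = sp * sq" "ratio = sq / sp" "pole_a = sp / sq" "pole_b = - (sp / sq) * (sq\<^sup>2 / D)"
      "kappa = sp\<^sup>2 / D"
    by (rule sqrt_parametrisation)
  show "0 < gmean" "0 < ratio" "0 < kappa" "0 < pole_a" "pole_a < 1" "pole_b < 0"
    unfolding params using sp \<open>0 < D\<close> by simp_all
  show "p < gmean" "gmean < q" unfolding params using sp by (simp_all add: power2_eq_square)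
  have "0 < (sq - sp)\<^sup>2" using sp by simp
  then show "r + 2 * gmean < 1" unfolding params using sp D sum_eq_1 by (simp add: power2_eq_square algebra_simps)
  have "sq\<^sup>2 / D < 1" using \<open>0 < D\<close> D(2) r_pos by simp
  then have "sp / sq * (sq\<^sup>2 / D) < 1 * 1"
    by (intro mult_strict_mono') (use sp \<open>0 < D\<close> in auto)
  then show "-1 < pole_b" unfolding params by simp
qed

lemma
  shows gmean_ratio: "gmean * ratio = q" "p * ratio = gmean"
    and ratio_mult_poles: "ratio * pole_a = 1" "ratio * pole_b = lam"
    and poles_are_roots: "(gmean - ratio) * (pole_a + pole_b) = - r" "(gmean - ratio) * pole_a * pole_b = gmean"
    and lam_eigenvalue: "q + r * lam + p * lam\<^sup>2 = lam\<^sup>2"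
    and initial_weights: "nu0 + c_lam + kappa = 1"
      "nu0 + kappa * (pole_a - ratio) / (pole_a - pole_b) = 0"
      "c_lam * lam + kappa * (ratio - pole_b * lam) / (pole_a - pole_b) = 0"
proof -
  obtain sp sq D E where sp: "0 < sp" "sp < sq" "p = sp\<^sup>2" "q = sq\<^sup>2" and "0 < D" "0 < E"
    and D: "D = 1 - sp\<^sup>2" "r = D - sq\<^sup>2" and E: "E = 1 + sq\<^sup>2 - sp\<^sup>2"
    and params: "gmean = sp * sq" "ratio = sq / sp" "pole_a = sp / sq" "pole_b = - (sp / sq) * (sq\<^sup>2 / D)"
      "lam = - (sq\<^sup>2 / D)" "c_lam = (E * D - sq\<^sup>2) / (E * D)" "kappa = sp\<^sup>2 / D" "nu0 = (sq\<^sup>2 - sp\<^sup>2) / E"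
    by (rule sqrt_parametrisation)
  have nz: "sp \<noteq> 0" "sq \<noteq> 0" "D \<noteq> 0" "E \<noteq> 0" using sp \<open>0 < D\<close> \<open>0 < E\<close> by auto
  have pole_diff: "pole_a - pole_b = sp * E / (sq * D)" unfolding params using nz
    by (simp add: field_simps) (simp add: D E algebra_simps power2_eq_square)
  show "gmean * ratio = q" "p * ratio = gmean" unfolding params using sp by (simp_all add: power2_eq_square)
  show "ratio * pole_a = 1" "ratio * pole_b = lam" unfolding params using nz by (simp_all add: field_simps)
  show "(gmean - ratio) * (pole_a + pole_b) = - r" "(gmean - ratio) * pole_a * pole_b = gmean"
    unfolding params unfolding D(2) using nz
    by (simp_all add: field_simps) (simp_all add: D(1) algebra_simps power2_eq_square)
  show "q + r * lam + p * lam\<^sup>2 = lam\<^sup>2" unfolding params unfolding D(2) sp(3,4) using nz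
    by (simp add: field_simps) (simp only: D(1), algebra)
  show "nu0 + c_lam + kappa = 1" unfolding params using nz
    by (simp add: field_simps) (simp add: D(1) E algebra_simps power2_eq_square)
  show "nu0 + kappa * (pole_a - ratio) / (pole_a - pole_b) = 0" unfolding pole_diff unfolding params using nz
    by (simp add: field_simps) (simp add: D(1) E algebra_simps power2_eq_square)
  show "c_lam * lam + kappa * (ratio - pole_b * lam) / (pole_a - pole_b) = 0"
    unfolding pole_diff unfolding params using nz
    by (simp add: field_simps) (simp only: D(1) E, algebra)
qed

lemma c_lam_pos: "0 < c_lam"
proof -
  have "1 * (q + r) < (1 + q - p) * (q + r)"
    using q_pos r_pos p_less_q by (intro mult_strict_right_mono) auto
  then have "0 < (1 + q - p) * (q + r) - q" using r_pos by simp
  then show ?thesis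
    unfolding c_lam_def using q_pos r_pos p_less_q by (intro divide_pos_pos) auto
qed

lemma rho_eq: "rho p q = (1 + q - p) / (q - p)"
proof -
  have "(\<lambda>x. piw p q x * 1 ^ x) sums (1 + 1 / (q - p * 1))"
    by (rule piw_power_sums) (use p_pos q_pos p_less_q in auto)
  then have "rho p q = 1 + 1 / (q - p)" unfolding rho_def by (simp add: sums_iff)
  then show ?thesis using p_less_q by (simp add: field_simps)
qed

lemma nu_eq: "nu p q x = piw p q x * nu0"
  unfolding nu_def rho_eq nu0_def using p_less_q by (simp add: field_simps)

lemma bdPt_0_to_0:
  "bdPt p q r 0 n 0 = nu0 + c_lam * lam ^ n + ratio ^ n * kappa *
     ((pole_a ^ (n + 1) - pole_b ^ (n + 1) - (if n = 0 then 0 else pole_a ^ (n - 1) - pole_b ^ (n - 1)))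
       / (pole_a - pole_b))"
proof (cases n)
  case 0
  then show ?thesis using initial_weights(1) pole_a_bounds pole_b_bounds by simp
next
  case (Suc m)
  have powers: "ratio ^ (m + 1) * pole_a ^ (m + 2) = pole_a" "ratio ^ (m + 1) * pole_b ^ (m + 2) = lam ^ (m + 1) * pole_b"
    "ratio ^ (m + 1) * pole_a ^ m = ratio" "ratio ^ (m + 1) * pole_b ^ m = lam ^ m * ratio"
  proof -
    have e: "ratio ^ (m + 1) * x ^ (m + 2) = (ratio * x) ^ (m + 1) * x"
      "ratio ^ (m + 1) * x ^ m = (ratio * x) ^ m * ratio" for x
      by (simp_all add: power_mult_distrib mult_ac)
    show "ratio ^ (m + 1) * pole_a ^ (m + 2) = pole_a" "ratio ^ (m + 1) * pole_b ^ (m + 2) = lam ^ (m + 1) * pole_b"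
      "ratio ^ (m + 1) * pole_a ^ m = ratio" "ratio ^ (m + 1) * pole_b ^ m = lam ^ m * ratio"
      unfolding e ratio_mult_poles by simp_all
  qed
  have "ratio ^ n * kappa * ((pole_a ^ (n + 1) - pole_b ^ (n + 1) - (if n = 0 then 0 else pole_a ^ (n - 1) - pole_b ^ (n - 1)))
       / (pole_a - pole_b))
      = kappa * ((ratio ^ (m + 1) * pole_a ^ (m + 2) - ratio ^ (m + 1) * pole_b ^ (m + 2)
          - (ratio ^ (m + 1) * pole_a ^ m - ratio ^ (m + 1) * pole_b ^ m)) / (pole_a - pole_b))"
    by (simp add: Suc algebra_simps)
  also have "\<dots> = kappa * (pole_a - ratio) / (pole_a - pole_b)
      + lam ^ m * (kappa * (ratio - pole_b * lam) / (pole_a - pole_b))"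
    unfolding powers by (simp add: algebra_simps diff_divide_distrib add_divide_distrib)
  also have "\<dots> = - nu0 - lam ^ m * (c_lam * lam)"
  proof -
    have "kappa * (pole_a - ratio) / (pole_a - pole_b) = - nu0"
      "kappa * (ratio - pole_b * lam) / (pole_a - pole_b) = - (c_lam * lam)"
      using initial_weights(2,3) by linarith+
    then show ?thesis by simp
  qed
  finally show ?thesis using Suc by simp
qed

lemma abs_lam: "\<bar>lam\<bar> = q / (q + r)" "\<bar>lam\<bar> < 1"
  using q_pos r_pos by (simp_all add: lam_def)

lemma geometric_mode_recurrence:
  "q * (nu0 + c_lam * lam ^ k) + r * (nu0 + c_lam * lam ^ (k + 1)) + p * (nu0 + c_lam * lam ^ (k + 2))
     = nu0 + c_lam * lam ^ (k + 2)"
proof -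
  have "q * (nu0 + c_lam * lam ^ k) + r * (nu0 + c_lam * lam ^ (k + 1)) + p * (nu0 + c_lam * lam ^ (k + 2))
      = (p + q + r) * nu0 + c_lam * lam ^ k * (q + r * lam + p * lam\<^sup>2)"
    by (simp add: algebra_simps power_add power2_eq_square)
  also have "\<dots> = nu0 + c_lam * lam ^ (k + 2)"
    using lam_eigenvalue sum_eq_1 by (simp add: power_add power2_eq_square)
  finally show ?thesis .
qed

lemma bdPt_0_to_0_formula:
  "complex_of_real (bdPt p q r 0 n 0) = of_real (nu0 + c_lam * lam ^ n)
     + of_real (ratio ^ n * kappa) * (1 / (2 * pi * \<i>))
       * contour_integral (circlepath 0 1) (spectral_integrand gmean r pole_a pole_b 0 n)"
proof -
  define W where "W = (pole_a ^ (n + 1) - pole_b ^ (n + 1)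
    - (if n = 0 then 0 else pole_a ^ (n - 1) - pole_b ^ (n - 1))) / (pole_a - pole_b)"
  have poles: "\<bar>pole_a\<bar> < 1" "\<bar>pole_b\<bar> < 1" "pole_a \<noteq> pole_b" "pole_a \<noteq> 0" "pole_b \<noteq> 0"
    using pole_a_bounds pole_b_bounds by auto
  define Z :: complex where "Z = 1 / (2 * pi * \<i>)"
  let ?J = "contour_integral (circlepath 0 1) (spectral_integrand gmean r pole_a pole_b 0 n)"
  have "Z * ?J = of_real W"
    using contour_integral_spectral_integrand_0[OF poles, of gmean r n] by (simp add: Z_def W_def)
  then have integral: "of_real (ratio ^ n * kappa) * Z * ?J = of_real (ratio ^ n * kappa) * of_real W"
    by (simp only: mult.assoc)
  have "bdPt p q r 0 n 0 = nu0 + c_lam * lam ^ n + ratio ^ n * kappa * W"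
    by (simp only: bdPt_0_to_0 W_def)
  then show ?thesis unfolding Z_def[symmetric] integral by simp
qed

lemma bdPt_to_0_formula:
  "complex_of_real (bdPt p q r t n 0) = of_real (nu0 + c_lam * lam ^ (t + n))
     + of_real (ratio ^ n * kappa) * (1 / (2 * pi * \<i>))
       * contour_integral (circlepath 0 1) (spectral_integrand gmean r pole_a pole_b t n)"
proof -
  define Z :: complex where "Z = 1 / (2 * pi * \<i>)"
  let ?J = "\<lambda>t n. contour_integral (circlepath 0 1) (spectral_integrand gmean r pole_a pole_b t n)"
  have poles: "\<bar>pole_a\<bar> < 1" "\<bar>pole_b\<bar> < 1" "pole_a \<noteq> pole_b" "pole_a \<noteq> 0" "pole_b \<noteq> 0"
    using pole_a_bounds pole_b_bounds by auto
  show ?thesis unfolding Z_def[symmetric]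
  proof (induction t arbitrary: n)
    case 0
    show ?case using bdPt_0_to_0_formula[of n] by (simp add: Z_def)
  next
    case (Suc t)
    show ?case
    proof (cases n)
      case 0
      have "bdPt p q r (Suc t) 0 0 = bdPt p q r t 1 0"
        using bdP_sum_mult[of p q r 0 "\<lambda>k. bdPt p q r t k 0"] by simp
      moreover have "?J (t + 1) 0 = of_real ratio * ?J t 1"
        by (rule contour_integral_spectral_integrand_boundary) (use poles poles_are_roots gmean_pos in auto)
      ultimately show ?thesis using Suc.IH[of 1] 0 by (simp add: algebra_simps)
    next
      case (Suc m)
      have column: "bdPt p q r (Suc t) n 0
          = q * bdPt p q r t m 0 + r * bdPt p q r t (m + 1) 0 + p * bdPt p q r t (m + 2) 0"
        using bdP_sum_mult[of p q r n "\<lambda>k. bdPt p q r t k 0"] Suc by simp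
      have geometric: "q * (nu0 + c_lam * lam ^ (t + m)) + r * (nu0 + c_lam * lam ^ (t + (m + 1)))
          + p * (nu0 + c_lam * lam ^ (t + (m + 2))) = nu0 + c_lam * lam ^ (Suc t + n)"
        using geometric_mode_recurrence[of "t + m"] Suc by (simp add: ac_simps)
      have integral: "of_real q * of_real ratio ^ m * ?J t m + of_real r * of_real ratio ^ (m + 1) * ?J t (m + 1)
          + of_real p * of_real ratio ^ (m + 2) * ?J t (m + 2) = of_real ratio ^ (m + 1) * ?J (t + 1) (m + 1)"
        by (rule contour_integral_spectral_integrand_recurrence) (use poles gmean_ratio in auto)
      have "complex_of_real (bdPt p q r (Suc t) n 0)
          = of_real (q * (nu0 + c_lam * lam ^ (t + m)) + r * (nu0 + c_lam * lam ^ (t + (m + 1)))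
              + p * (nu0 + c_lam * lam ^ (t + (m + 2))))
            + of_real kappa * Z * (of_real q * of_real ratio ^ m * ?J t m
              + of_real r * of_real ratio ^ (m + 1) * ?J t (m + 1) + of_real p * of_real ratio ^ (m + 2) * ?J t (m + 2))"
        unfolding column using Suc.IH[of m] Suc.IH[of "m + 1"] Suc.IH[of "m + 2"]
        by (simp add: algebra_simps)
      also have "\<dots> = of_real (nu0 + c_lam * lam ^ (Suc t + n))
          + of_real kappa * Z * (of_real ratio ^ (m + 1) * ?J (t + 1) (m + 1))"
        unfolding geometric integral ..
      finally show ?thesis using Suc by (simp add: algebra_simps)
    qed
  qed
qed

lemma bdPt_to_0_deviation:
  "\<bar>bdPt p q r t n 0 - nu0 - c_lam * lam ^ (t + n)\<bar>
     \<le> deviation_const * ratio ^ n * (r + 2 * gmean) ^ t"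
proof -
  let ?J = "contour_integral (circlepath 0 1) (spectral_integrand gmean r pole_a pole_b t n)"
  have "complex_of_real (bdPt p q r t n 0 - nu0 - c_lam * lam ^ (t + n))
      = of_real (ratio ^ n * kappa) * (1 / (2 * pi * \<i>)) * ?J"
    using bdPt_to_0_formula[of t n] by simp
  then have "\<bar>bdPt p q r t n 0 - nu0 - c_lam * lam ^ (t + n)\<bar>
      = norm (of_real (ratio ^ n * kappa) * (1 / (2 * pi * \<i>)) * ?J)"
    by (metis norm_of_real)
  also have "\<dots> = ratio ^ n * kappa / (2 * pi) * norm ?J"
    using ratio_pos kappa_pos by (simp add: norm_mult norm_divide norm_power)
  also have "\<dots> \<le> ratio ^ n * kappa / (2 * pi)
      * (2 * (r + 2 * gmean) ^ t / ((1 - \<bar>pole_a\<bar>) * (1 - \<bar>pole_b\<bar>)) * (2 * pi))"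
    by (intro mult_left_mono norm_contour_integral_spectral_integrand_le)
      (use pole_a_bounds pole_b_bounds gmean_pos r_pos ratio_pos kappa_pos in auto)
  also have "\<dots> = deviation_const * ratio ^ n * (r + 2 * gmean) ^ t"
    using pole_a_bounds pole_b_bounds by (simp add: deviation_const_def)
  finally show ?thesis .
qed

lemma tendsto_bdPt_0_0: "(\<lambda>t. bdPt p q r t 0 0) \<longlonglongrightarrow> nu0"
proof -
  define C where "C = deviation_const"
  have dev: "norm (bdPt p q r t 0 0 - nu0) \<le> c_lam * \<bar>lam\<bar> ^ t + C * (r + 2 * gmean) ^ t" for t
  proof -
    have "\<bar>bdPt p q r t 0 0 - nu0 - c_lam * lam ^ t\<bar> \<le> C * (r + 2 * gmean) ^ t"
      using bdPt_to_0_deviation[of t 0] by (simp add: C_def)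
    moreover have "\<bar>c_lam * lam ^ t\<bar> = c_lam * \<bar>lam\<bar> ^ t"
      using c_lam_pos by (simp add: abs_mult power_abs)
    ultimately show ?thesis by simp
  qed
  have "(\<lambda>t. c_lam * \<bar>lam\<bar> ^ t + C * (r + 2 * gmean) ^ t) \<longlonglongrightarrow> c_lam * 0 + C * 0"
    by (intro tendsto_intros LIMSEQ_realpow_zero)
      (use abs_lam spectral_edge_lt_1 gmean_pos r_pos in auto)
  then have lim: "(\<lambda>t. c_lam * \<bar>lam\<bar> ^ t + C * (r + 2 * gmean) ^ t) \<longlonglongrightarrow> 0"
    by simp
  have "(\<lambda>t. bdPt p q r t 0 0 - nu0) \<longlonglongrightarrow> 0"
  proof (rule Lim_null_comparison[OF always_eventually lim], rule allI)
    show "norm (bdPt p q r t 0 0 - nu0) \<le> c_lam * \<bar>lam\<bar> ^ t + C * (r + 2 * gmean) ^ t" for t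
      by (rule dev)
  qed
  then show ?thesis by (simp add: LIM_zero_iff)
qed

text \<open>The atoms of \<open>\<psi>\<close> at \<open>\<plusminus>1\<close> are separated by the even and odd subsequences of
  \<open>P\<^sup>t(0,0) = \<integral>\<^sub>(\<^sub>-\<^sub>1\<^sub>,\<^sub>1\<^sub>) x\<^sup>t d\<psi> + \<psi>{1} + (-1)\<^sup>t \<psi>{-1}\<close>.\<close>

lemma spectral_atoms:
  assumes spectral: "is_spectral_measure p q r \<psi>"
  shows "measure \<psi> {1} = nu0" "measure \<psi> {-1} = 0"
proof -
  have "p \<noteq> 0" using p_pos by simp
  define u1 u2 where "u1 = measure \<psi> {1}" and "u2 = measure \<psi> {-1}"
  have moments: "bdPt p q r t 0 0 = (LINT x:{-1<..<1}|\<psi>. x ^ t) + u1 + (-1) ^ t * u2" for t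
    using bdPt_to_0_eq_integral[OF spectral \<open>p \<noteq> 0\<close>, of t 0]
      integral_spectral_split[OF spectral, of "\<lambda>x. x ^ t"]
    by (simp add: u1_def u2_def continuous_on_power continuous_on_id)
  have "(\<lambda>t. bdPt p q r t 0 0 - (LINT x:{-1<..<1}|\<psi>. x ^ t) - nu0) \<longlonglongrightarrow> nu0 - 0 - nu0"
    by (intro tendsto_intros tendsto_bdPt_0_0 tendsto_interior_moments[OF spectral])
  then have u: "(\<lambda>t. u1 + (-1) ^ t * u2 - nu0) \<longlonglongrightarrow> 0"
    by (simp add: moments algebra_simps)
  have "(\<lambda>t. u1 + (-1) ^ (2 * t) * u2 - nu0) \<longlonglongrightarrow> 0"
    using LIMSEQ_subseq_LIMSEQ[OF u, of "\<lambda>t. 2 * t"] by (simp add: strict_mono_def o_def)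
  then have even: "u1 + u2 - nu0 = 0" by (simp add: LIMSEQ_const_iff)
  have "(\<lambda>t. u1 + (-1) ^ (2 * t + 1) * u2 - nu0) \<longlonglongrightarrow> 0"
    using LIMSEQ_subseq_LIMSEQ[OF u, of "\<lambda>t. 2 * t + 1"] by (simp add: strict_mono_def o_def)
  then have odd: "u1 - u2 - nu0 = 0" by (simp add: LIMSEQ_const_iff)
  from even odd show "measure \<psi> {1} = nu0" "measure \<psi> {-1} = 0"
    unfolding u1_def u2_def by linarith+
qed

lemma interior_integral_formula:
  assumes spectral: "is_spectral_measure p q r \<psi>"
  shows "complex_of_real (LINT x:{-1<..<1}|\<psi>. x ^ t * Qpoly p q r n x) = of_real (c_lam * lam ^ (t + n))
     + of_real (ratio ^ n * kappa) * (1 / (2 * pi * \<i>))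
       * contour_integral (circlepath 0 1) (spectral_integrand gmean r pole_a pole_b t n)"
proof -
  have "p \<noteq> 0" using p_pos by simp
  have "bdPt p q r t n 0 = (LINT x:{-1<..<1}|\<psi>. x ^ t * Qpoly p q r n x) + nu0"
    using bdPt_to_0_eq_integral[OF spectral \<open>p \<noteq> 0\<close>]
      integral_spectral_split[OF spectral, of "\<lambda>x. x ^ t * Qpoly p q r n x"]
      spectral_atoms[OF spectral] Qpoly_1[OF \<open>p \<noteq> 0\<close> sum_eq_1]
    by (simp add: continuous_intros continuous_on_Qpoly)
  then show ?thesis using bdPt_to_0_formula[of t n] by simp
qed

lemma abs_nu_sub_mu_le:
  "\<bar>nu p q x - mu p q r t x\<bar>
     \<le> piw p q x * (c_lam * (q / (q + r)) ^ t * (q / (q + r)) ^ x + deviation_const * ratio ^ x * (r + 2 * gmean) ^ t)"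
proof -
  have "\<bar>c_lam * lam ^ (t + x)\<bar> = c_lam * (q / (q + r)) ^ t * (q / (q + r)) ^ x"
    using c_lam_pos abs_lam by (simp add: abs_mult power_abs power_add)
  with bdPt_to_0_deviation[of t x]
  have "\<bar>nu0 - bdPt p q r t x 0\<bar>
      \<le> c_lam * (q / (q + r)) ^ t * (q / (q + r)) ^ x + deviation_const * ratio ^ x * (r + 2 * gmean) ^ t"
    by linarith
  moreover have "\<bar>nu p q x - mu p q r t x\<bar> = piw p q x * \<bar>nu0 - bdPt p q r t x 0\<bar>"
    using p_pos q_pos piw_nonneg[of p q x]
    by (simp add: nu_eq mu_eq_piw_bdPt abs_mult right_diff_distrib[symmetric])
  ultimately show ?thesis
    using p_pos q_pos piw_nonneg[of p q x] by (simp add: mult_left_mono)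
qed

lemma geometric_constant_eq:
  "1 / 2 * c_lam * (1 + q / (q + r) / (q - p * (q / (q + r))))
     = ((1 + q - p) * (q + r) - q) / ((1 + q - p) * (1 - 2 * p))"
proof -
  have "q + r = 1 - p" "1 - 2 * p > 0" "1 - p > 0" using sum_eq_1 p_less_q r_pos by auto
  then have nz: "q \<noteq> 0" "1 - p \<noteq> 0" "1 - 2 * p \<noteq> 0" "1 + q - p \<noteq> 0" "q + r \<noteq> 0"
    using q_pos p_less_q by auto
  have "q - p * (q / (1 - p)) = q * (1 - 2 * p) / (1 - p)"
    using \<open>1 - p > 0\<close> by (simp add: field_simps)
  then have "1 / (1 - 2 * p) = q / (1 - p) / (q - p * (q / (1 - p)))"
    using nz by (simp add: divide_simps)
  then have sum: "1 + q / (q + r) / (q - p * (q / (q + r))) = 2 * (q + r) / (1 - 2 * p)"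
    unfolding \<open>q + r = 1 - p\<close> using nz by (simp add: field_simps)
  have "1 / 2 * (N / (E * D)) * (2 * D / F) = N / (E * F)" if "E \<noteq> 0" "D \<noteq> 0" for N E D F :: real
    using that by (simp add: field_simps)
  then show ?thesis
    unfolding sum c_lam_def using nz by blast
qed

lemma continuous_constant_eq:
  "1 / 2 * deviation_const * (1 + ratio / (q - p * ratio))
     = (p / (q + r) * (1 + 1 / (sqrt (p * q) - p))) /
       ((1 - sqrt (p / q) * (r + (1 + q - p)) / (2 * (q + r))) * (1 + sqrt (p / q) * (r - (1 + q - p)) / (2 * (q + r))))"
proof -
  have "q - p * ratio = gmean * ratio - p * ratio"
    using gmean_ratio(1) by simp
  also have "\<dots> = ratio * (gmean - p)"
    by (simp add: algebra_simps)
  finally have "ratio / (q - p * ratio) = 1 / (gmean - p)"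
    using ratio_pos by simp
  then show ?thesis
    unfolding pole_a_eq pole_b_eq deviation_const_def kappa_def gmean_def[symmetric] by simp
qed

lemma tv_dist_le:
  "tv_dist p q r t \<le> ((1 + q - p) * (q + r) - q) / ((1 + q - p) * (1 - 2 * p)) * (q / (q + r)) ^ t
     + (p / (q + r) * (1 + 1 / (sqrt (p * q) - p))) / ((1 - sqrt (p / q) * (r + (1 + q - p)) / (2 * (q + r))) *
         (1 + sqrt (p / q) * (r - (1 + q - p)) / (2 * (q + r)))) * (r + 2 * sqrt (p * q)) ^ t"
proof -
  define y where "y = q / (q + r)"
  define m where "m = r + 2 * gmean"
  have "p * q < q * (q + r)"
    using mult_strict_left_mono[of p "q + r" q] p_less_q q_pos r_pos by (simp add: mult.commute)
  then have y: "0 \<le> y" "p * y < q"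
    unfolding y_def using q_pos r_pos by (simp_all add: pos_divide_less_eq)
  have ratio: "0 \<le> ratio" "p * ratio < q" using ratio_pos gmean_ratio gmean_bounds by auto
  define G where
    "G x = c_lam * y ^ t * (piw p q x * y ^ x) + deviation_const * m ^ t * (piw p q x * ratio ^ x)" for x
  have termwise: "\<bar>nu p q x - mu p q r t x\<bar> \<le> G x" for x
    using abs_nu_sub_mu_le[of x t] unfolding G_def y_def m_def by (simp add: algebra_simps)
  have G_sums: "G sums (c_lam * y ^ t * (1 + y / (q - p * y))
      + deviation_const * m ^ t * (1 + ratio / (q - p * ratio)))"
    unfolding G_def by (intro sums_add sums_mult piw_power_sums) (use p_pos q_pos y ratio in auto)
  have "summable (\<lambda>x. \<bar>nu p q x - mu p q r t x\<bar>)"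
    by (rule summable_comparison_test'[OF sums_summable[OF G_sums]]) (use termwise in auto)
  then have "tv_dist p q r t \<le> 1 / 2 * (c_lam * y ^ t * (1 + y / (q - p * y))
      + deviation_const * m ^ t * (1 + ratio / (q - p * ratio)))"
    unfolding tv_dist_def using suminf_le[OF termwise _ sums_summable[OF G_sums]] sums_unique[OF G_sums] by simp
  also have "\<dots> = (1 / 2 * c_lam * (1 + y / (q - p * y))) * y ^ t
      + (1 / 2 * deviation_const * (1 + ratio / (q - p * ratio))) * m ^ t"
    by (simp add: algebra_simps)
  finally show ?thesis
    unfolding y_def m_def geometric_constant_eq continuous_constant_eq gmean_def .
qed

end

theorem theorem1:
  fixes p q r :: real
  assumes "p > 0" "q > 0" "r > 0" "p + q + r = 1" "q > p"
  defines "ap \<equiv> sqrt (p / q) * (r + (1 + q - p)) / (2 * (q + r))"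
      and "am \<equiv> sqrt (p / q) * (r - (1 + q - p)) / (2 * (q + r))"
      and "A \<equiv> ((1 + q - p) * (q + r) - q) / ((1 + q - p) * (1 - 2 * p))"
      and "B \<equiv> (p / (q + r) * (1 + 1 / (sqrt (p * q) - p))) / ((1 - sqrt (p / q) * (r + (1 + q - p)) / (2 * (q + r))) *
              (1 + sqrt (p / q) * (r - (1 + q - p)) / (2 * (q + r))))"
      and "m \<equiv> max (r + 2 * sqrt (p * q)) (q / (q + r))"
  shows "(\<forall>\<psi> t n. is_spectral_measure p q r \<psi> \<longrightarrow>
            complex_of_real (LINT x:{-1<..<1}|\<psi>. x ^ t * Qpoly p q r n x) =
              complex_of_real (((1 + q - p) * (q + r) - q) / ((1 + q - p) * (q + r))
                               * (- q / (q + r)) ^ (t + n))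
              + complex_of_real (sqrt (q / p) ^ n * (p / (q + r)))
                * (1 / (2 * pi * \<i>)) *
                contour_integral (circlepath 0 1)
                  (\<lambda>z. (complex_of_real (sqrt (p * q)) * (z + inverse z) + complex_of_real r) ^ t
                        * z ^ n * (z - inverse z)
                        / ((z - complex_of_real ap) * (z - complex_of_real am))))
       \<and> (\<forall>t. tv_dist p q r t \<le> A * (q / (q + r)) ^ t + B * (r + 2 * sqrt (p * q)) ^ t)
       \<and> (\<lambda>\<epsilon>. real (tmix p q r \<epsilon>)) \<in> O[at_right 0](\<lambda>\<epsilon>. ln \<epsilon> / ln m)"
proof -
  interpret birth_death_chain p q r
    using assms(1-5) by unfold_locales
  have tv: "tv_dist p q r t \<le> A * (q / (q + r)) ^ t + B * (r + 2 * sqrt (p * q)) ^ t" for t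
    unfolding A_def B_def by (rule tv_dist_le)
  have m: "0 < m" "m < 1"
    using abs_lam spectral_edge_lt_1 gmean_pos q_pos r_pos unfolding m_def gmean_def
    by (auto simp: less_max_iff_disj)
  have "tv_dist p q r t \<le> (\<bar>A\<bar> + \<bar>B\<bar>) * m ^ t" for t
  proof -
    have "A * (q / (q + r)) ^ t \<le> \<bar>A\<bar> * m ^ t" "B * (r + 2 * sqrt (p * q)) ^ t \<le> \<bar>B\<bar> * m ^ t"
      using assms(2,3) gmean_pos unfolding m_def gmean_def
      by (auto intro!: mult_mono power_mono simp: abs_le_iff)
    with tv[of t] show ?thesis by (simp add: algebra_simps)
  qed
  then have "(\<lambda>\<epsilon>. real (tmix p q r \<epsilon>)) \<in> O[at_right 0](\<lambda>\<epsilon>. ln \<epsilon> / ln m)"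
    unfolding tmix_def using m by (rule Least_geometric_decay_bigo)
  moreover have "ap = pole_a" "am = pole_b"
    unfolding ap_def am_def by (rule pole_a_eq pole_b_eq)+
  ultimately show ?thesis
    using interior_integral_formula tv
    unfolding c_lam_def lam_def ratio_def kappa_def gmean_def spectral_integrand_def
    by simp
qed

end
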